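(* Let $\mathcal X$ be a finite set and let $\mathcal C$ be a set of probability measures on $(\mathcal X^\infty,\mathcal F)$. Suppose there is a probability measure $\rho$ on $(\mathcal X^\infty,\mathcal F)$ such that $\rho$ predicts every $\mu\in\mathcal C$ in expected average KL divergence. Then there exist a sequence $\mu_k\in\mathcal C$, $k\in\mathbb N$, and positive weights $w_k$, $k\in\mathbb N$, such that the measure $\nu:=\sum_{k\in\mathbb N} w_k\mu_k$ predicts every $\mu\in\mathcal C$ in expected average KL divergence.
   Context: $\mathcal X^\infty$ is the set of one-way infinite sequences $x_1,x_2,\dots$ with $x_i\in\mathcal X$, and $\mathcal F$ is the sigma-field generated by the cylinder sets $[x_{1..n}]$ (all infinite sequences starting with $x_1,\dots,x_n$), $n\in\mathbb N$. For probability measures $\mu,\rho$ the expected cumulative Kullback–Leibler divergence is $d_n(\mu,\rho):=\mathbf E_\mu\sum_{t=1}^n\sum_{a\in\mathcal X}\mu(x_t=a\mid x_{1..t-1})\log\frac{\mu(x_t=a\mid x_{1..t-1})}{\rho(x_t=a\mid x_{1..t-1})}$, equivalently $d_n(\mu,\rho)=-\sum_{x_{1..n}\in\mathcal X^n}\mu(x_{1..n})\log\frac{\rho(x_{1..n})}{\mu(x_{1..n})}$, where $\mu(x_{1..n})$ denotes the $\mu$-probability of the cylinder $[x_{1..n}]$. We say $\rho$ predicts $\mu$ in expected average KL divergence if $\frac1n d_n(\mu,\rho)\to 0$ as $n\to\infty$. *)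

theory Defs
  imports "HOL-Probability.Probability"
begin

text \<open>The sigma-field is that of the library's stream space over the discrete space on 'a,
  i.e. the sigma-field generated by the cylinder sets.\<close>

definition seq_prob :: "'a stream measure \<Rightarrow> bool" where
  "seq_prob M \<longleftrightarrow> prob_space M \<and> sets M = sets (stream_space (count_space (UNIV :: 'a set)))"

definition cyl :: "'a stream measure \<Rightarrow> 'a list \<Rightarrow> real" where
  "cyl M xs = measure M {\<omega> \<in> space M. stake (length xs) \<omega> = xs}"

definition kl_term :: "real \<Rightarrow> real \<Rightarrow> ereal" where
  "kl_term m r = (if m = 0 then 0 else if r = 0 then \<infinity> else ereal (m * ln (m / r)))"

definition kl_div :: "nat \<Rightarrow> 'a stream measure \<Rightarrow> 'a stream measure \<Rightarrow> ereal" where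
  "kl_div n \<mu> \<rho> = (\<Sum>xs \<in> {xs :: 'a list. length xs = n}. kl_term (cyl \<mu> xs) (cyl \<rho> xs))"

definition predicts :: "'a stream measure \<Rightarrow> 'a stream measure \<Rightarrow> bool" where
  "predicts \<rho> \<mu> \<longleftrightarrow> ((\<lambda>n. kl_div n \<mu> \<rho> / ereal (real n)) \<longlongrightarrow> 0) sequentially"

end

theory Submission
  imports Defs "HOL-Real_Asymp.Real_Asymp"
begin

text \<open>
  The mixture is assembled from finitely many members of \<open>C\<close> for every word length \<open>n\<close> and every
  scale \<open>j\<close>. At scale \<open>j\<close> a greedy choice of about \<open>e^(n/j)\<close> measures \<open>\<mu>' \<in> C\<close> ensures that,
  for every \<open>\<mu> \<in> C\<close>, the words on which \<open>\<rho> \<le> n \<mu>\<close> but \<open>\<rho> > n \<mu>'\<close> for all chosen \<open>\<mu>'\<close> have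
  \<open>\<rho>\<close>-mass at most \<open>e^(-n/j)\<close>; in addition every word \<open>x\<close> contributes a member of \<open>C\<close> that nearly
  maximises \<open>\<mu>(x)\<close>. With weights proportional to \<open>1/k\<^sup>2\<close>, the mixture \<open>\<nu>\<close> satisfies \<open>\<nu> \<ge> \<beta> \<rho>\<close>
  on the covered words, where \<open>log(1/\<beta>) \<le> 4n/j + O(log n)\<close>, and \<open>\<nu> \<ge> \<alpha> \<mu>\<close> everywhere, where
  \<open>log(1/\<alpha>) = O(n)\<close>. The uncovered words carry \<open>\<mu>\<close>-mass \<open>O(j (1 + d\<^sub>n(\<mu>,\<rho>)) / n)\<close>: on them
  \<open>\<mu>\<close> is either small compared to \<open>\<rho>\<close>, or comparable to \<open>\<rho>\<close> on a set of small \<open>\<rho>\<close>-mass, or much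
  larger than \<open>\<rho>\<close>, which costs divergence. Hence \<open>d\<^sub>n(\<mu>,\<nu>) \<le> 4n/j + O\<^sub>j(d\<^sub>n(\<mu>,\<rho>) + log n)\<close>,
  and \<open>d\<^sub>n(\<mu>,\<nu>)/n \<rightarrow> 0\<close> follows by letting \<open>n \<rightarrow> \<infinity>\<close> and then \<open>j \<rightarrow> \<infinity>\<close>.
\<close>

section \<open>Cylinder probabilities and countable mixtures\<close>

lemma space_seq_prob:
  assumes "seq_prob (M :: 'a stream measure)"
  shows "space M = UNIV"
proof -
  have "space M = space (stream_space (count_space UNIV))"
    using assms unfolding seq_prob_def by (intro sets_eq_imp_space_eq) simp
  then show ?thesis
    by (simp add: space_stream_space)
qed

lemma cylinder_in_sets:
  assumes "seq_prob (M :: ('a::countable) stream measure)"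
  shows "{\<omega> \<in> space M. stake n \<omega> = xs} \<in> sets M"
proof -
  have "sets M = sets (stream_space (count_space UNIV))"
    using assms by (simp add: seq_prob_def)
  then have "M \<rightarrow>\<^sub>M count_space UNIV
      = stream_space (count_space UNIV) \<rightarrow>\<^sub>M (count_space UNIV :: 'a list measure)"
    by (rule measurable_cong_sets) simp
  then have "stake n \<in> M \<rightarrow>\<^sub>M count_space UNIV"
    using measurable_stake by simp
  then have "stake n -` {xs} \<inter> space M \<in> sets M"
    by (rule measurable_sets) auto
  then show ?thesis
    by (simp add: vimage_def Int_def conj_commute)
qed

lemma finite_lists_of_length: "finite {xs :: ('a::finite) list. length xs = n}"
  using finite_lists_length_eq[of "UNIV :: 'a set" n] by simp

lemma cyl_nonneg: "0 \<le> cyl M xs"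
  by (simp add: cyl_def)

lemma cyl_le_1: "seq_prob M \<Longrightarrow> cyl M xs \<le> 1"
  unfolding cyl_def seq_prob_def by (simp add: prob_space.prob_le_1)

lemma sum_cyl_eq_1:
  assumes "seq_prob (M :: ('a::finite) stream measure)"
  shows "(\<Sum>xs | length xs = n. cyl M xs) = 1"
proof -
  interpret prob_space M
    using assms by (simp add: seq_prob_def)
  let ?A = "\<lambda>xs. {\<omega> \<in> space M. stake n \<omega> = xs}"
  have "(\<Sum>xs | length xs = n. cyl M xs) = (\<Sum>xs | length xs = n. measure M (?A xs))"
    by (intro sum.cong) (auto simp: cyl_def)
  also have "\<dots> = measure M (\<Union>xs \<in> {xs. length xs = n}. ?A xs)"
    using cylinder_in_sets[OF assms]
    by (intro finite_measure_finite_Union[symmetric]) (auto simp: finite_lists_of_length disjoint_family_on_def)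
  also have "(\<Union>xs \<in> {xs. length xs = n}. ?A xs) = space M"
    by auto
  finally show ?thesis
    by (simp add: prob_space)
qed

definition mixture :: "(nat \<Rightarrow> real) \<Rightarrow> (nat \<Rightarrow> 'a stream measure) \<Rightarrow> 'a stream measure" where
  "mixture w \<mu>s = density (count_space UNIV) (\<lambda>k. ennreal (w k)) \<bind> \<mu>s"

context
  fixes w :: "nat \<Rightarrow> real" and \<mu>s :: "nat \<Rightarrow> ('a::countable) stream measure"
  assumes seq_prob_components: "\<And>k. seq_prob (\<mu>s k)"
    and weights_nonneg: "\<And>k. 0 \<le> w k"
begin

private abbreviation "W \<equiv> density (count_space UNIV) (\<lambda>k. ennreal (w k))"

private lemma components_measurable:
  "\<mu>s \<in> W \<rightarrow>\<^sub>M subprob_algebra (stream_space (count_space UNIV))"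
  using seq_prob_components
  by (auto simp: space_subprob_algebra seq_prob_def prob_space_imp_subprob_space)

lemma emeasure_mixture:
  assumes "A \<in> sets (stream_space (count_space UNIV))"
  shows "emeasure (mixture w \<mu>s) A = (\<Sum>k. ennreal (w k) * emeasure (\<mu>s k) A)"
proof -
  have "emeasure (mixture w \<mu>s) A = (\<integral>\<^sup>+k. emeasure (\<mu>s k) A \<partial>W)"
    unfolding mixture_def by (rule emeasure_bind[OF _ components_measurable assms]) simp
  also have "\<dots> = (\<Sum>k. ennreal (w k) * emeasure (\<mu>s k) A)"
    by (simp add: nn_integral_density nn_integral_count_space_nat)
  finally show ?thesis .
qed

lemma seq_prob_mixture:
  assumes "w sums 1"
  shows "seq_prob (mixture w \<mu>s)"
proof -
  have "emeasure W (space W) = (\<Sum>k. ennreal (w k))"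
    by (simp add: emeasure_density nn_integral_count_space_nat)
  also have "\<dots> = ennreal (suminf w)"
    using assms weights_nonneg by (intro suminf_ennreal2) (auto simp: sums_iff)
  also have "\<dots> = 1"
    using assms by (simp add: sums_iff)
  finally have "prob_space W"
    by (intro prob_spaceI) simp
  then have "prob_space (mixture w \<mu>s)"
    unfolding mixture_def using components_measurable seq_prob_components
    by (intro prob_space.prob_space_bind) (auto simp: seq_prob_def)
  moreover have "sets (mixture w \<mu>s) = sets (stream_space (count_space UNIV))"
    unfolding mixture_def using seq_prob_components
    by (intro sets_bind) (auto simp: seq_prob_def)
  ultimately show ?thesis
    by (simp add: seq_prob_def)
qed

lemma cyl_mixture_ge:
  assumes "w sums 1"
  shows "w k * cyl (\<mu>s k) xs \<le> cyl (mixture w \<mu>s) xs"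
proof -
  let ?\<nu> = "mixture w \<mu>s"
  let ?A = "{\<omega> \<in> space ?\<nu>. stake (length xs) \<omega> = xs}"
  have \<nu>: "seq_prob ?\<nu>"
    using assms by (rule seq_prob_mixture)
  then have A: "?A \<in> sets (stream_space (count_space UNIV))"
    using cylinder_in_sets by (fastforce simp: seq_prob_def)
  interpret \<nu>: prob_space ?\<nu>
    using \<nu> by (simp add: seq_prob_def)
  interpret K: prob_space "\<mu>s k"
    using seq_prob_components by (simp add: seq_prob_def)
  have "ennreal (w k) * emeasure (\<mu>s k) ?A \<le> (\<Sum>k. ennreal (w k) * emeasure (\<mu>s k) ?A)"
    using sum_le_suminf[of "\<lambda>k. ennreal (w k) * emeasure (\<mu>s k) ?A" "{k}"] by simp
  also have "\<dots> = emeasure ?\<nu> ?A"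
    using A by (rule emeasure_mixture[symmetric])
  finally have "ennreal (w k * measure (\<mu>s k) ?A) \<le> ennreal (measure ?\<nu> ?A)"
    using weights_nonneg by (simp add: \<nu>.emeasure_eq_measure K.emeasure_eq_measure ennreal_mult)
  then have "w k * measure (\<mu>s k) ?A \<le> measure ?\<nu> ?A"
    by simp
  then show ?thesis
    using space_seq_prob[OF \<nu>] space_seq_prob[OF seq_prob_components] by (simp add: cyl_def)
qed

end

section \<open>Real-valued divergence\<close>

text \<open>\<open>kl_term_real\<close> agrees with \<open>kl_term\<close> when \<open>m \<noteq> 0\<close> implies \<open>r \<noteq> 0\<close>; otherwise \<open>ln (m / 0) = 0\<close> is junk.\<close>

definition kl_term_real :: "real \<Rightarrow> real \<Rightarrow> real" where
  "kl_term_real m r = (if m = 0 then 0 else m * ln (m / r))"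

definition kl_div_real :: "nat \<Rightarrow> 'a stream measure \<Rightarrow> 'a stream measure \<Rightarrow> real" where
  "kl_div_real n \<mu> \<rho> = (\<Sum>xs | length xs = n. kl_term_real (cyl \<mu> xs) (cyl \<rho> xs))"

definition cyl_abs_cont :: "nat \<Rightarrow> 'a stream measure \<Rightarrow> 'a stream measure \<Rightarrow> bool" where
  "cyl_abs_cont n \<mu> \<rho> \<longleftrightarrow> (\<forall>xs. length xs = n \<longrightarrow> cyl \<mu> xs \<noteq> 0 \<longrightarrow> cyl \<rho> xs \<noteq> 0)"

lemma cyl_abs_contD:
  assumes "cyl_abs_cont n \<mu> \<rho>" "xs \<in> {xs. length xs = n}"
  shows "0 \<le> cyl \<mu> xs \<and> 0 \<le> cyl \<rho> xs \<and> (0 < cyl \<mu> xs \<longrightarrow> 0 < cyl \<rho> xs)"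
  using assms cyl_nonneg[of \<rho> xs] by (auto simp: cyl_abs_cont_def cyl_nonneg less_le)

lemma kl_term_real_ge:
  assumes "0 \<le> m" "0 \<le> r" "0 < m \<Longrightarrow> 0 < r"
  shows "m - r \<le> kl_term_real m r"
proof (cases "m = 0")
  case False
  then have m: "0 < m" and r: "0 < r"
    using assms by auto
  have "ln (r / m) \<le> r / m - 1"
    using m r by (intro ln_le_minus_one) simp
  then have "m * (1 - r / m) \<le> m * ln (m / r)"
    using m r by (intro mult_left_mono) (auto simp: ln_div)
  then show ?thesis
    using m by (simp add: kl_term_real_def algebra_simps)
qed (use assms in \<open>simp add: kl_term_real_def\<close>)

lemma kl_term_real_le:
  assumes "0 < m" "0 < t" "t \<le> r"
  shows "kl_term_real m r \<le> m * ln (m / t)"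
  using assms by (simp add: kl_term_real_def frac_le mult_left_mono)

lemma sum_kl_term_real_ge:
  assumes "\<And>x. x \<in> S \<Longrightarrow> 0 \<le> p x \<and> 0 \<le> r x \<and> (0 < p x \<longrightarrow> 0 < r x)"
  shows "sum p S - sum r S \<le> (\<Sum>x\<in>S. kl_term_real (p x) (r x))"
proof -
  have "(\<Sum>x\<in>S. p x - r x) \<le> (\<Sum>x\<in>S. kl_term_real (p x) (r x))"
    using assms by (intro sum_mono kl_term_real_ge) auto
  then show ?thesis
    by (simp add: sum_subtractf)
qed

lemma sum_kl_term_real_subset_le:
  assumes "finite S" "A \<subseteq> S" "sum q S = 1"
    and "\<And>x. x \<in> S \<Longrightarrow> 0 \<le> p x \<and> 0 \<le> q x \<and> (0 < p x \<longrightarrow> 0 < q x)"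
  shows "(\<Sum>x\<in>A. kl_term_real (p x) (q x)) \<le> (\<Sum>x\<in>S. kl_term_real (p x) (q x)) + 1"
proof -
  have "sum q (S - A) \<le> sum q S"
    using assms by (intro sum_mono2) auto
  moreover have "sum p (S - A) - sum q (S - A) \<le> (\<Sum>x\<in>S - A. kl_term_real (p x) (q x))"
    using assms(4) by (intro sum_kl_term_real_ge) auto
  moreover have "0 \<le> sum p (S - A)"
    using assms(4) by (intro sum_nonneg) auto
  ultimately show ?thesis
    using assms(1-3) sum.subset_diff[of A S "\<lambda>x. kl_term_real (p x) (q x)"] by linarith
qed

lemma kl_div_eq_ereal:
  assumes "cyl_abs_cont n \<mu> \<rho>"
  shows "kl_div n \<mu> \<rho> = ereal (kl_div_real n \<mu> \<rho>)"
proof -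
  have "kl_term (cyl \<mu> xs) (cyl \<rho> xs) = ereal (kl_term_real (cyl \<mu> xs) (cyl \<rho> xs))"
    if "length xs = n" for xs
    using assms that by (auto simp: cyl_abs_cont_def kl_term_def kl_term_real_def)
  then have "kl_div n \<mu> \<rho> = (\<Sum>xs | length xs = n. ereal (kl_term_real (cyl \<mu> xs) (cyl \<rho> xs)))"
    unfolding kl_div_def by (intro sum.cong) auto
  then show ?thesis
    by (simp add: kl_div_real_def)
qed

lemma kl_div_eq_infinity:
  "\<not> cyl_abs_cont n (\<mu> :: ('a::finite) stream measure) \<rho> \<Longrightarrow> kl_div n \<mu> \<rho> = \<infinity>"
  unfolding kl_div_def cyl_abs_cont_def
  by (subst sum_Pinfty) (auto simp: finite_lists_of_length kl_term_def)

lemma predicts_iff_kl_div_real: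
  "predicts \<rho> (\<mu> :: ('a::finite) stream measure) \<longleftrightarrow>
     eventually (\<lambda>n. cyl_abs_cont n \<mu> \<rho>) sequentially \<and>
     (\<lambda>n. kl_div_real n \<mu> \<rho> / real n) \<longlonglongrightarrow> 0"
proof -
  have ereal_eq: "eventually (\<lambda>n. kl_div n \<mu> \<rho> / ereal (real n) = ereal (kl_div_real n \<mu> \<rho> / real n)) sequentially"
    if "eventually (\<lambda>n. cyl_abs_cont n \<mu> \<rho>) sequentially"
    using that eventually_gt_at_top[of 0] by eventually_elim (simp add: kl_div_eq_ereal)
  show ?thesis
  proof
    assume pred: "predicts \<rho> \<mu>"
    have "eventually (\<lambda>n. kl_div n \<mu> \<rho> / ereal (real n) < 1) sequentially"
      using pred unfolding predicts_def by (rule order_tendstoD) simp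
    then have abs_cont: "eventually (\<lambda>n. cyl_abs_cont n \<mu> \<rho>) sequentially"
      using eventually_gt_at_top[of 0]
    proof eventually_elim
      case (elim n)
      then show ?case
        using kl_div_eq_infinity[of n \<mu> \<rho>] by (cases "cyl_abs_cont n \<mu> \<rho>") auto
    qed
    have "((\<lambda>n. ereal (kl_div_real n \<mu> \<rho> / real n)) \<longlongrightarrow> ereal 0) sequentially"
      using pred tendsto_cong[OF ereal_eq[OF abs_cont]] by (simp add: predicts_def zero_ereal_def)
    with abs_cont show "eventually (\<lambda>n. cyl_abs_cont n \<mu> \<rho>) sequentially \<and>
        (\<lambda>n. kl_div_real n \<mu> \<rho> / real n) \<longlonglongrightarrow> 0"
      by (simp add: lim_ereal)
  next
    assume "eventually (\<lambda>n. cyl_abs_cont n \<mu> \<rho>) sequentially \<and>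
        (\<lambda>n. kl_div_real n \<mu> \<rho> / real n) \<longlonglongrightarrow> 0"
    then show "predicts \<rho> \<mu>"
      unfolding predicts_def by (subst tendsto_cong[OF ereal_eq]) (auto simp: zero_ereal_def)
  qed
qed

lemma kl_div_real_nonneg:
  assumes "seq_prob \<mu>" "seq_prob (\<rho> :: ('a::finite) stream measure)" "cyl_abs_cont n \<mu> \<rho>"
  shows "0 \<le> kl_div_real n \<mu> \<rho>"
  using sum_kl_term_real_ge[of "{xs. length xs = n}" "cyl \<mu>" "cyl \<rho>"] cyl_abs_contD[OF assms(3)]
    sum_cyl_eq_1[OF assms(1)] sum_cyl_eq_1[OF assms(2)]
  by (simp add: kl_div_real_def)

section \<open>Estimates on a finite set of words\<close>

context
  fixes S :: "'b set" and p q :: "'b \<Rightarrow> real"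
  assumes finite: "finite S" and sum_q: "sum q S = 1"
    and abs_cont: "\<And>x. x \<in> S \<Longrightarrow> 0 \<le> p x \<and> 0 \<le> q x \<and> (0 < p x \<longrightarrow> 0 < q x)"
begin

lemma sum_large_ratio_le:
  assumes "1 < E"
  shows "(\<Sum>x | x \<in> S \<and> E * q x < p x. p x) \<le> ((\<Sum>x\<in>S. kl_term_real (p x) (q x)) + 1) / ln E"
proof -
  let ?A = "{x. x \<in> S \<and> E * q x < p x}"
  have pointwise: "p x * ln E \<le> kl_term_real (p x) (q x)" if "x \<in> ?A" for x
  proof -
    have "0 < p x" "0 < q x"
      using that abs_cont[of x] assms by (auto intro: le_less_trans[of 0 "E * q x"])
    moreover have "E < p x / q x"
      using that \<open>0 < q x\<close> by (simp add: field_simps)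
    ultimately show ?thesis
      using assms by (simp add: kl_term_real_def)
  qed
  have "sum p ?A * ln E \<le> (\<Sum>x\<in>?A. kl_term_real (p x) (q x))"
    unfolding sum_distrib_right using pointwise by (rule sum_mono)
  also have "\<dots> \<le> (\<Sum>x\<in>S. kl_term_real (p x) (q x)) + 1"
    using finite sum_q abs_cont by (intro sum_kl_term_real_subset_le) auto
  finally show ?thesis
    using assms by (simp add: pos_le_divide_eq)
qed

text \<open>Split \<open>S - U\<close> by the likelihood ratio: where \<open>c p < q\<close> the mass is at most \<open>1/c\<close>; where
  \<open>q \<le> c p\<close> and \<open>p \<le> E q\<close> it is at most \<open>E \<delta>\<close>; and where \<open>p > E q\<close> it is paid for by the divergence.\<close>

lemma sum_outside_cover_le:
  assumes "1 < E" "0 < c" and cover: "sum q ({x \<in> S. q x \<le> c * p x} - U) \<le> \<delta>"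
  shows "sum p (S - U) \<le> 1 / c + E * \<delta> + ((\<Sum>x\<in>S. kl_term_real (p x) (q x)) + 1) / ln E"
proof -
  define T where "T = {x \<in> S. q x \<le> c * p x}"
  define V where "V = {x \<in> S. p x \<le> E * q x}"
  have nonneg: "0 \<le> p x" "0 \<le> q x" if "x \<in> S" for x
    using abs_cont[OF that] by auto
  have "sum p (S - U - T) \<le> (\<Sum>x\<in>S - U - T. q x / c)"
    using assms by (intro sum_mono) (auto simp: T_def field_simps)
  also have "\<dots> = sum q (S - U - T) / c"
    by (simp add: sum_divide_distrib)
  also have "\<dots> \<le> sum q S / c"
    using finite nonneg \<open>0 < c\<close> by (intro divide_right_mono sum_mono2) auto
  finally have small_ratio: "sum p (S - U - T) \<le> 1 / c"
    by (simp add: sum_q)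
  have "sum p ((S - U) \<inter> T \<inter> V) \<le> (\<Sum>x\<in>(S - U) \<inter> T \<inter> V. E * q x)"
    by (intro sum_mono) (auto simp: V_def)
  also have "\<dots> = E * sum q ((S - U) \<inter> T \<inter> V)"
    by (simp add: sum_distrib_left)
  also have "\<dots> \<le> E * sum q (T - U)"
    using finite nonneg \<open>1 < E\<close> by (intro mult_left_mono sum_mono2) (auto simp: T_def)
  also have "\<dots> \<le> E * \<delta>"
    using cover \<open>1 < E\<close> by (simp add: T_def)
  finally have moderate_ratio: "sum p ((S - U) \<inter> T \<inter> V) \<le> E * \<delta>" .
  have "sum p ((S - U) \<inter> T - V) \<le> (\<Sum>x | x \<in> S \<and> E * q x < p x. p x)"
    using finite nonneg by (intro sum_mono2) (auto simp: V_def)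
  with sum_large_ratio_le[OF assms(1)]
  have large_ratio: "sum p ((S - U) \<inter> T - V) \<le> ((\<Sum>x\<in>S. kl_term_real (p x) (q x)) + 1) / ln E"
    by linarith
  have "sum p (S - U) = sum p ((S - U) \<inter> T) + sum p (S - U - T)"
    using finite by (intro sum.Int_Diff) simp
  moreover have "sum p ((S - U) \<inter> T) = sum p ((S - U) \<inter> T \<inter> V) + sum p ((S - U) \<inter> T - V)"
    using finite by (intro sum.Int_Diff) simp
  ultimately show ?thesis
    using small_ratio moderate_ratio large_ratio by linarith
qed

lemma sum_kl_term_real_dominated_le:
  assumes sum_p: "sum p S = 1" and "0 < \<alpha>" and crude: "\<And>x. x \<in> S \<Longrightarrow> \<alpha> * p x \<le> v x"
    and "0 < \<beta>" "\<beta> \<le> 1" and "U \<subseteq> S" and fine: "\<And>x. x \<in> U \<Longrightarrow> \<beta> * q x \<le> v x"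
  shows "(\<Sum>x\<in>S. kl_term_real (p x) (v x))
    \<le> (\<Sum>x\<in>S. kl_term_real (p x) (q x)) + 1 + ln (1 / \<beta>) + sum p (S - U) * ln (1 / \<alpha>)"
proof -
  have on_U: "kl_term_real (p x) (v x) \<le> kl_term_real (p x) (q x) + p x * ln (1 / \<beta>)" if "x \<in> U" for x
  proof (cases "p x = 0")
    case False
    then have "0 < p x" "0 < q x"
      using abs_cont[of x] that \<open>U \<subseteq> S\<close> by auto
    then have "kl_term_real (p x) (v x) \<le> p x * ln (p x / (\<beta> * q x))"
      using fine[OF that] \<open>0 < \<beta>\<close> by (intro kl_term_real_le) auto
    also have "\<dots> = kl_term_real (p x) (q x) + p x * ln (1 / \<beta>)"
      using \<open>0 < p x\<close> \<open>0 < q x\<close> \<open>0 < \<beta>\<close> by (simp add: kl_term_real_def ln_div ln_mult algebra_simps)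
    finally show ?thesis .
  qed (simp add: kl_term_real_def)
  have off_U: "kl_term_real (p x) (v x) \<le> p x * ln (1 / \<alpha>)" if "x \<in> S" for x
  proof (cases "p x = 0")
    case False
    then have "0 < p x"
      using abs_cont[OF that] by auto
    then have "kl_term_real (p x) (v x) \<le> p x * ln (p x / (\<alpha> * p x))"
      using crude[OF that] \<open>0 < \<alpha>\<close> by (intro kl_term_real_le) auto
    then show ?thesis
      using \<open>0 < p x\<close> by simp
  qed (simp add: kl_term_real_def)
  have "(\<Sum>x\<in>S. kl_term_real (p x) (v x))
      = (\<Sum>x\<in>U. kl_term_real (p x) (v x)) + (\<Sum>x\<in>S - U. kl_term_real (p x) (v x))"
    using finite \<open>U \<subseteq> S\<close> by (simp add: sum.subset_diff)
  also have "\<dots> \<le> (\<Sum>x\<in>U. kl_term_real (p x) (q x) + p x * ln (1 / \<beta>))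
      + (\<Sum>x\<in>S - U. p x * ln (1 / \<alpha>))"
    using on_U off_U by (intro add_mono sum_mono) auto
  also have "\<dots> = (\<Sum>x\<in>U. kl_term_real (p x) (q x)) + sum p U * ln (1 / \<beta>)
      + sum p (S - U) * ln (1 / \<alpha>)"
    by (simp add: sum.distrib sum_distrib_right)
  also have "(\<Sum>x\<in>U. kl_term_real (p x) (q x)) \<le> (\<Sum>x\<in>S. kl_term_real (p x) (q x)) + 1"
    using finite \<open>U \<subseteq> S\<close> sum_q abs_cont by (rule sum_kl_term_real_subset_le)
  also have "sum p U * ln (1 / \<beta>) \<le> ln (1 / \<beta>)"
  proof -
    have "sum p U \<le> sum p S"
      using finite \<open>U \<subseteq> S\<close> abs_cont by (intro sum_mono2) auto
    then show ?thesis
      using sum_p \<open>0 < \<beta>\<close> \<open>\<beta> \<le> 1\<close> mult_right_mono[of "sum p U" 1 "ln (1 / \<beta>)"] by simp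
  qed
  finally show ?thesis
    by simp
qed

end

section \<open>Greedy covers\<close>

lemma greedy_cover_step:
  fixes T :: "'m \<Rightarrow> 'b set" and q :: "'b \<Rightarrow> real"
  assumes "finite S" and "\<And>x. x \<in> S \<Longrightarrow> 0 \<le> q x" and "\<And>\<mu>. \<mu> \<in> C \<Longrightarrow> T \<mu> \<subseteq> S" and "C \<noteq> {}"
    and "U \<subseteq> S" and IH: "\<And>\<mu>. \<mu> \<in> C \<Longrightarrow> real m * sum q (T \<mu> - U) \<le> sum q U"
  shows "\<exists>\<mu>'\<in>C. \<forall>\<mu>\<in>C. real (Suc m) * sum q (T \<mu> - (U \<union> T \<mu>')) \<le> sum q (U \<union> T \<mu>')"
proof -
  define gain where "gain \<mu> = sum q (T \<mu> - U)" for \<mu>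
  have "finite (gain ` C)"
  proof (rule finite_subset)
    show "gain ` C \<subseteq> (\<lambda>A. sum q (A - U)) ` Pow S"
      using assms(3) by (auto simp: gain_def)
  qed (use \<open>finite S\<close> in simp)
  then have "Max (gain ` C) \<in> gain ` C"
    using \<open>C \<noteq> {}\<close> by (intro Max_in) auto
  then obtain \<mu>' where "\<mu>' \<in> C" and "gain \<mu>' = Max (gain ` C)"
    by auto
  with \<open>finite (gain ` C)\<close> have greedy: "gain \<mu> \<le> gain \<mu>'" if "\<mu> \<in> C" for \<mu>
    using that by simp
  have finite_T: "finite (T \<mu>)" if "\<mu> \<in> C" for \<mu>
    by (rule finite_subset[OF assms(3)[OF that] assms(1)])
  have "sum q (U \<union> T \<mu>') = sum q (U \<union> (T \<mu>' - U))"
    by simp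
  also have "\<dots> = sum q U + gain \<mu>'"
    unfolding gain_def using finite_subset[OF \<open>U \<subseteq> S\<close> \<open>finite S\<close>] finite_T[OF \<open>\<mu>' \<in> C\<close>]
    by (intro sum.union_disjoint) auto
  finally have sum_union: "sum q (U \<union> T \<mu>') = sum q U + gain \<mu>'" .
  have "real (Suc m) * sum q (T \<mu> - (U \<union> T \<mu>')) \<le> sum q (U \<union> T \<mu>')" if "\<mu> \<in> C" for \<mu>
  proof -
    have "sum q (T \<mu> - (U \<union> T \<mu>')) \<le> gain \<mu>"
      unfolding gain_def using finite_T[OF \<open>\<mu> \<in> C\<close>] assms(2,3) \<open>\<mu> \<in> C\<close> by (intro sum_mono2) auto
    moreover have "0 \<le> sum q (T \<mu> - (U \<union> T \<mu>'))"
      using assms(2,3) \<open>\<mu> \<in> C\<close> by (intro sum_nonneg) auto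
    moreover have "real m * gain \<mu> \<le> sum q U"
      using IH[OF \<open>\<mu> \<in> C\<close>] by (simp add: gain_def)
    ultimately show ?thesis
      using greedy[OF \<open>\<mu> \<in> C\<close>] mult_left_mono[of "sum q (T \<mu> - (U \<union> T \<mu>'))" "gain \<mu>" "real m"]
      by (simp add: sum_union algebra_simps)
  qed
  with \<open>\<mu>' \<in> C\<close> show ?thesis
    by blast
qed

lemma greedy_cover:
  fixes T :: "'m \<Rightarrow> 'b set" and q :: "'b \<Rightarrow> real"
  assumes "finite S" and "\<And>x. x \<in> S \<Longrightarrow> 0 \<le> q x" and "\<And>\<mu>. \<mu> \<in> C \<Longrightarrow> T \<mu> \<subseteq> S" and "C \<noteq> {}"
  shows "\<exists>g. (\<forall>i. g i \<in> C) \<and>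
    (\<forall>\<mu>\<in>C. real m * sum q (T \<mu> - (\<Union>i<m. T (g i))) \<le> sum q (\<Union>i<m. T (g i)))"
proof (induction m)
  case 0
  then show ?case
    using \<open>C \<noteq> {}\<close> by auto
next
  case (Suc m)
  then obtain g where gC: "\<forall>i. g i \<in> C"
    and IH: "\<forall>\<mu>\<in>C. real m * sum q (T \<mu> - (\<Union>i<m. T (g i))) \<le> sum q (\<Union>i<m. T (g i))"
    by blast
  define U where "U = (\<Union>i<m. T (g i))"
  have "U \<subseteq> S"
    using assms(3) gC by (auto simp: U_def)
  moreover have "real m * sum q (T \<mu> - U) \<le> sum q U" if "\<mu> \<in> C" for \<mu>
    using IH that by (simp add: U_def)
  ultimately have "\<exists>\<mu>'\<in>C. \<forall>\<mu>\<in>C. real (Suc m) * sum q (T \<mu> - (U \<union> T \<mu>')) \<le> sum q (U \<union> T \<mu>')"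
    using assms by (intro greedy_cover_step[of S q]) auto
  then obtain \<mu>' where "\<mu>' \<in> C"
    and step: "\<forall>\<mu>\<in>C. real (Suc m) * sum q (T \<mu> - (U \<union> T \<mu>')) \<le> sum q (U \<union> T \<mu>')"
    by blast
  define g' where "g' = g(m := \<mu>')"
  have "\<forall>i. g' i \<in> C"
    using gC \<open>\<mu>' \<in> C\<close> by (simp add: g'_def)
  moreover have "(\<Union>i<Suc m. T (g' i)) = U \<union> T \<mu>'"
    by (auto simp: g'_def U_def lessThan_Suc)
  ultimately show ?case
    using step by (intro exI[of _ g']) simp
qed

lemma exists_near_maximizer:
  fixes f :: "'m \<Rightarrow> real"
  assumes "C \<noteq> {}" and "\<And>\<mu>. \<mu> \<in> C \<Longrightarrow> 0 \<le> f \<mu>" and "bdd_above (f ` C)"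
  shows "\<exists>\<mu>'\<in>C. \<forall>\<mu>\<in>C. f \<mu> \<le> 2 * f \<mu>'"
proof -
  define s where "s = (SUP \<mu>\<in>C. f \<mu>)"
  have le_s: "f \<mu> \<le> s" if "\<mu> \<in> C" for \<mu>
    unfolding s_def using that assms(3) by (rule cSUP_upper)
  show ?thesis
  proof (cases "0 < s")
    case True
    then have "s / 2 < (SUP \<mu>\<in>C. f \<mu>)"
      by (simp add: s_def)
    then obtain \<mu>' where "\<mu>' \<in> C" "s / 2 < f \<mu>'"
      using less_cSUP_iff[OF assms(1,3)] by blast
    then show ?thesis
      using le_s by force
  next
    case False
    obtain \<mu>0 where "\<mu>0 \<in> C"
      using assms(1) by blast
    show ?thesis
    proof (intro bexI[of _ \<mu>0] ballI)
      fix \<mu>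
      assume "\<mu> \<in> C"
      then show "f \<mu> \<le> 2 * f \<mu>0"
        using le_s[of \<mu>] False assms(2)[OF \<open>\<mu>0 \<in> C\<close>] by linarith
    qed fact
  qed
qed

section \<open>Weights of a triply indexed family\<close>

definition inverse_square_weight :: "nat \<Rightarrow> real" where
  "inverse_square_weight k = 6 / (pi^2 * (real k + 1)^2)"

lemma inverse_square_weight_pos: "0 < inverse_square_weight k"
  by (simp add: inverse_square_weight_def add_pos_nonneg)

lemma inverse_square_weight_sums: "inverse_square_weight sums 1"
proof -
  have "(\<lambda>k. 6 / pi^2 * (1 / (real k + 1)^2)) sums (6 / pi^2 * (pi^2 / 6))"
    using inverse_squares_sums by (intro sums_mult) (simp add: add.commute)
  then show ?thesis
    unfolding inverse_square_weight_def[abs_def] by simp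
qed

definition flatten_family :: "(nat \<Rightarrow> nat \<Rightarrow> nat \<Rightarrow> 'b) \<Rightarrow> nat \<Rightarrow> 'b" where
  "flatten_family F k = (case prod_decode k of (a, i) \<Rightarrow> case_prod F (prod_decode a) i)"

lemma flatten_family_prod_encode [simp]:
  "flatten_family F (prod_encode (prod_encode (n, j), i)) = F n j i"
  by (simp add: flatten_family_def)

lemma flatten_family_in: "(\<And>n j i. F n j i \<in> C) \<Longrightarrow> flatten_family F k \<in> C"
  by (simp add: flatten_family_def split: prod.split)

lemma prod_encode_bound: "prod_encode (a, b) + 1 \<le> (a + b + 1)^2"
proof -
  have "triangle (a + b) \<le> (a + b) * Suc (a + b)"
    by (simp add: triangle_def)
  then show ?thesis
    by (simp add: prod_encode_def power2_eq_square algebra_simps)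
qed

definition weight_bound :: "nat \<Rightarrow> nat \<Rightarrow> real" where
  "weight_bound a b = 6 / pi^2 / real ((a + 1)^2 + b) ^ 4"

lemma one_le_square_plus: "1 \<le> real ((a + 1)^2 + b)"
proof -
  have "(1::nat) \<le> (a + 1)^2 + b"
    using one_le_power[of "a + 1" 2] by linarith
  then show ?thesis
    by (metis of_nat_1 of_nat_le_iff)
qed

lemma weight_bound_pos: "0 < weight_bound a b"
  using one_le_square_plus[of a b] unfolding weight_bound_def
  by (intro divide_pos_pos zero_less_power) auto

lemma weight_bound_le_1: "weight_bound a b \<le> 1"
proof -
  have "1 \<le> real ((a + 1)^2 + b) ^ 4"
    using one_le_square_plus by (rule one_le_power)
  then have "weight_bound a b \<le> 6 / pi^2 / 1"
    unfolding weight_bound_def by (intro divide_left_mono) auto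
  also have "\<dots> \<le> 1"
    using pi_gt3 power_strict_mono[of 3 pi 2] by simp
  finally show ?thesis .
qed

lemma weight_bound_le_inverse_square_weight:
  assumes "i < m"
  shows "weight_bound (n + j) m \<le> inverse_square_weight (prod_encode (prod_encode (n, j), i))"
proof -
  define M where "M = (n + j + 1)^2 + m"
  have "prod_encode (prod_encode (n, j), i) + 1 \<le> (prod_encode (n, j) + i + 1)^2"
    by (rule prod_encode_bound)
  also have "\<dots> \<le> M^2"
    using prod_encode_bound[of n j] assms by (intro power_mono) (simp_all add: M_def)
  finally have "real (prod_encode (prod_encode (n, j), i)) + 1 \<le> real M ^ 2"
    by (metis of_nat_Suc of_nat_le_iff of_nat_power Suc_eq_plus1 add.commute)
  then have "(real (prod_encode (prod_encode (n, j), i)) + 1)^2 \<le> real M ^ 4"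
    using power_mono[of _ "real M ^ 2" 2] by (simp add: power_mult[symmetric])
  then have "6 / (pi^2 * real M ^ 4) \<le> 6 / (pi^2 * (real (prod_encode (prod_encode (n, j), i)) + 1)^2)"
    by (intro divide_left_mono mult_left_mono) (auto intro!: mult_pos_pos simp: M_def)
  then show ?thesis
    by (simp add: inverse_square_weight_def weight_bound_def M_def)
qed

lemma ln_inverse_weight_bound_le: "ln (1 / weight_bound a b) \<le> 2 + 4 * ln (real ((a + 1)^2 + b))"
proof -
  define M where "M = real ((a + 1)^2 + b)"
  have "1 \<le> M"
    unfolding M_def by (rule one_le_square_plus)
  have "ln (pi^2 / 6) \<le> pi^2 / 6 - 1"
    by (intro ln_le_minus_one) simp
  also have "\<dots> \<le> 2"
    using pi_less_4 power_strict_mono[of pi 4 2] by simp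
  finally have "ln (pi^2 / 6) \<le> 2" .
  moreover have "ln (1 / weight_bound a b) = ln (pi^2 / 6 * M ^ 4)"
    by (simp add: weight_bound_def M_def)
  moreover have "\<dots> = ln (pi^2 / 6) + ln (M ^ 4)"
    using \<open>1 \<le> M\<close> by (intro ln_mult_pos) auto
  moreover have "ln (M ^ 4) = 4 * ln M"
    using \<open>1 \<le> M\<close> by (simp add: ln_realpow)
  ultimately show ?thesis
    unfolding M_def by linarith
qed

lemma ln_two_div_weight_bound_le:
  fixes n N :: nat
  assumes "1 \<le> n" "1 \<le> N"
  shows "ln (2 / weight_bound n (N ^ n)) \<le> (15 + 4 * ln (real N)) * real n"
proof -
  define M where "M = real ((n + 1)^2 + N ^ n)"
  have "1 \<le> (real n + 1)^2" "1 \<le> real N ^ n"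
    using assms by (auto intro: one_le_power)
  then have "(real n + 1)^2 \<le> (real n + 1)^2 * real N ^ n" "real N ^ n \<le> (real n + 1)^2 * real N ^ n"
    using mult_left_mono[of 1 "real N ^ n" "(real n + 1)^2"] mult_right_mono[of 1 "(real n + 1)^2" "real N ^ n"]
    by auto
  moreover have "M = (real n + 1)^2 + real N ^ n"
    by (simp add: M_def)
  ultimately have "M \<le> 2 * ((real n + 1)^2 * real N ^ n)"
    by linarith
  then have "ln M \<le> ln (2 * ((real n + 1)^2 * real N ^ n))"
    using one_le_square_plus[of n "N ^ n"] by (intro ln_mono) (auto simp: M_def)
  also have "\<dots> = ln 2 + (ln ((real n + 1)^2) + ln (real N ^ n))"
    using assms by (simp add: ln_mult_pos)
  also have "\<dots> = ln 2 + 2 * ln (real n + 1) + real n * ln (real N)"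
    using assms by (simp add: ln_realpow)
  finally have "ln M \<le> ln 2 + 2 * ln (real n + 1) + real n * ln (real N)" .
  moreover have "ln (real n + 1) \<le> real n"
    using ln_add_one_self_le_self[of "real n"] by (simp add: add.commute)
  moreover have "ln (2 / weight_bound n (N ^ n)) = ln 2 + ln (1 / weight_bound n (N ^ n))"
    using ln_mult_pos[of 2 "1 / weight_bound n (N ^ n)"] weight_bound_pos[of n "N ^ n"] by simp
  moreover have "(15 + 4 * ln (real N)) * real n = 15 * real n + 4 * (real n * ln (real N))"
    by (simp add: algebra_simps)
  ultimately show ?thesis
    using ln_inverse_weight_bound_le[of n "N ^ n"] ln_2_less_1 assms unfolding M_def by linarith
qed

lemma ln_real_div_weight_bound_le:
  fixes n j K :: nat
  assumes "1 \<le> n" "1 \<le> j" "real K \<le> 2 * exp (real n / real j)"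
  shows "ln (real n / weight_bound (n + j) K)
    \<le> 4 * (real n / real j) + (2 + 4 * ln 3 + 8 * ln (real n + real j + 1) + ln (real n))"
proof -
  define L where "L = (real n + real j + 1)^2"
  define e where "e = exp (real n / real j)"
  define M where "M = real ((n + j + 1)^2 + K)"
  have "1 \<le> L" "1 \<le> e" "1 \<le> M"
    using one_le_square_plus[of "n + j" K] by (simp_all add: L_def e_def M_def)
  have "L \<le> L * e" "2 * e \<le> 2 * (L * e)"
    using \<open>1 \<le> L\<close> \<open>1 \<le> e\<close> mult_left_mono[of 1 e L] mult_right_mono[of 1 L e] by auto
  moreover have "M = L + real K"
    by (simp add: M_def L_def)
  ultimately have "M \<le> 3 * (L * e)"
    using assms(3) unfolding e_def by linarith
  then have "ln M \<le> ln (3 * (L * e))"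
    using \<open>1 \<le> M\<close> by (intro ln_mono) auto
  also have "\<dots> = ln 3 + (ln L + ln e)"
    using \<open>1 \<le> L\<close> \<open>1 \<le> e\<close> by (simp add: ln_mult_pos)
  also have "\<dots> = ln 3 + 2 * ln (real n + real j + 1) + real n / real j"
    by (simp add: L_def e_def ln_realpow add_pos_nonneg)
  finally have "ln M \<le> ln 3 + 2 * ln (real n + real j + 1) + real n / real j" .
  moreover have "ln (real n / weight_bound (n + j) K) = ln (real n) + ln (1 / weight_bound (n + j) K)"
    using assms ln_mult_pos[of "real n" "1 / weight_bound (n + j) K"] weight_bound_pos[of "n + j" K] by simp
  ultimately show ?thesis
    using ln_inverse_weight_bound_le[of "n + j" K] unfolding M_def by linarith
qed

lemma tendsto_zero_by_bounds:
  fixes f :: "nat \<Rightarrow> real" and e :: "nat \<Rightarrow> nat \<Rightarrow> real"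
  assumes "eventually (\<lambda>n. 0 \<le> f n) sequentially"
    and bound: "\<And>j. 1 \<le> j \<Longrightarrow> eventually (\<lambda>n. f n \<le> c * (real n / real j) + e j n) sequentially"
    and remainder: "\<And>j. 1 \<le> j \<Longrightarrow> (\<lambda>n. e j n / real n) \<longlonglongrightarrow> 0"
  shows "(\<lambda>n. f n / real n) \<longlonglongrightarrow> 0"
proof (rule order_tendstoI)
  fix a :: real
  assume "a < 0"
  show "eventually (\<lambda>n. a < f n / real n) sequentially"
    using assms(1) by eventually_elim (meson \<open>a < 0\<close> divide_nonneg_nonneg less_le_trans of_nat_0_le_iff)
next
  fix a :: real
  assume "0 < a"
  define j where "j = nat \<lceil>2 * \<bar>c\<bar> / a\<rceil> + 1"
  have "1 \<le> j"
    by (simp add: j_def)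
  have "2 * \<bar>c\<bar> / a < real j"
    unfolding j_def by linarith
  then have "c / real j < a / 2"
    using \<open>0 < a\<close> \<open>1 \<le> j\<close> by (simp add: field_simps)
  have "eventually (\<lambda>n. e j n / real n < a / 2) sequentially"
    using remainder[OF \<open>1 \<le> j\<close>] by (rule order_tendstoD) (use \<open>0 < a\<close> in simp)
  then show "eventually (\<lambda>n. f n / real n < a) sequentially"
    using bound[OF \<open>1 \<le> j\<close>] eventually_gt_at_top[of 0]
  proof eventually_elim
    case (elim n)
    then have "f n / real n \<le> (c * (real n / real j) + e j n) / real n"
      by (intro divide_right_mono) auto
    also have "\<dots> = c / real j + e j n / real n"
      using elim by (simp add: field_simps)
    finally have "f n / real n \<le> c / real j + e j n / real n" .
    then show ?case
      using elim \<open>c / real j < a / 2\<close> by linarith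
  qed
qed

lemma exp_le_nat_ceiling_exp: "exp x \<le> real (nat \<lceil>exp x\<rceil>)"
proof -
  have "real (nat \<lceil>exp x\<rceil>) = of_int \<lceil>exp x\<rceil>"
    by (simp add: less_imp_le)
  then show ?thesis
    by (simp add: le_of_int_ceiling)
qed

lemma nat_ceiling_exp_le:
  assumes "0 \<le> x"
  shows "real (nat \<lceil>exp x\<rceil>) \<le> 2 * exp x"
proof -
  have "1 \<le> exp x"
    using assms by simp
  moreover have "real (nat \<lceil>exp x\<rceil>) = of_int \<lceil>exp x\<rceil>"
    by (simp add: less_imp_le)
  ultimately show ?thesis
    using of_int_ceiling_le_add_one[of "exp x"] by linarith
qed

lemma exp_half_divide_le:
  fixes x K :: real
  assumes "0 < x" "exp x \<le> K"
  shows "exp (x / 2) / K \<le> 2 / x"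
proof -
  have "0 < K"
    using assms(2) exp_gt_zero[of x] by linarith
  then have "exp (x / 2) / K \<le> exp (x / 2) / exp x"
    using assms by (intro divide_left_mono) auto
  also have "\<dots> = 1 / exp (x / 2)"
    by (simp add: exp_add[symmetric] field_simps)
  also have "\<dots> \<le> 1 / (1 + x / 2)"
    using assms exp_ge_add_one_self[of "x / 2"] by (intro divide_left_mono) (auto simp: add_pos_nonneg)
  also have "\<dots> \<le> 2 / x"
    using assms by (simp add: field_simps)
  finally show ?thesis .
qed

section \<open>The mixture predictor\<close>

locale predictable_class =
  fixes C :: "('a::finite) stream measure set" and \<rho> :: "'a stream measure"
  assumes class_nonempty: "C \<noteq> {}"
    and seq_prob_class: "\<And>\<mu>. \<mu> \<in> C \<Longrightarrow> seq_prob \<mu>"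
    and seq_prob_predictor: "seq_prob \<rho>"
    and predicts_class: "\<And>\<mu>. \<mu> \<in> C \<Longrightarrow> predicts \<rho> \<mu>"
begin

definition good_words :: "nat \<Rightarrow> 'a stream measure \<Rightarrow> 'a list set" where
  "good_words n \<mu> = {xs. length xs = n \<and> cyl \<rho> xs \<le> real n * cyl \<mu> xs}"

definition cover_size :: "nat \<Rightarrow> nat \<Rightarrow> nat" where
  "cover_size n j = nat \<lceil>exp (real n / real j)\<rceil>"

definition covers :: "nat \<Rightarrow> nat \<Rightarrow> (nat \<Rightarrow> 'a stream measure) \<Rightarrow> bool" where
  "covers n j g \<longleftrightarrow> (\<forall>i. g i \<in> C) \<and>
     (\<forall>\<mu>\<in>C. real (cover_size n j) * sum (cyl \<rho>) (good_words n \<mu> - (\<Union>i<cover_size n j. good_words n (g i)))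
        \<le> sum (cyl \<rho>) (\<Union>i<cover_size n j. good_words n (g i)))"

definition cover :: "nat \<Rightarrow> nat \<Rightarrow> nat \<Rightarrow> 'a stream measure" where
  "cover n j = (SOME g. covers n j g)"

definition cover_words :: "nat \<Rightarrow> nat \<Rightarrow> 'a list set" where
  "cover_words n j = (\<Union>i<cover_size n j. good_words n (cover n j i))"

lemma covers_cover: "covers n j (cover n j)"
proof -
  have "\<exists>g. covers n j g"
    unfolding covers_def using class_nonempty
    by (intro greedy_cover[of "{xs. length xs = n}"]) (auto simp: finite_lists_of_length cyl_nonneg good_words_def)
  then show ?thesis
    unfolding cover_def by (rule someI_ex)
qed

lemma cover_in_class: "cover n j i \<in> C"
  using covers_cover by (simp add: covers_def)

lemma sum_good_words_outside_cover_le: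
  assumes "\<mu> \<in> C"
  shows "sum (cyl \<rho>) (good_words n \<mu> - cover_words n j) \<le> 1 / real (cover_size n j)"
proof -
  have "0 < real (cover_size n j)"
    using exp_le_nat_ceiling_exp[of "real n / real j"] exp_gt_zero[of "real n / real j"] unfolding cover_size_def by linarith
  moreover have "real (cover_size n j) * sum (cyl \<rho>) (good_words n \<mu> - cover_words n j)
      \<le> sum (cyl \<rho>) (cover_words n j)"
    using covers_cover assms by (simp add: covers_def cover_words_def)
  moreover have "sum (cyl \<rho>) (cover_words n j) \<le> (\<Sum>xs | length xs = n. cyl \<rho> xs)"
    by (intro sum_mono2) (auto simp: finite_lists_of_length cyl_nonneg cover_words_def good_words_def)
  ultimately show ?thesis
    using sum_cyl_eq_1[OF seq_prob_predictor] by (simp add: field_simps)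
qed

definition near_max :: "'a list \<Rightarrow> 'a stream measure" where
  "near_max xs = (SOME \<mu>'. \<mu>' \<in> C \<and> (\<forall>\<mu>\<in>C. cyl \<mu> xs \<le> 2 * cyl \<mu>' xs))"

lemma near_max_spec: "near_max xs \<in> C \<and> (\<forall>\<mu>\<in>C. cyl \<mu> xs \<le> 2 * cyl (near_max xs) xs)"
proof -
  have "bdd_above ((\<lambda>\<mu>. cyl \<mu> xs) ` C)"
    using cyl_le_1 seq_prob_class by (auto intro!: bdd_aboveI[of _ 1])
  then have "\<exists>\<mu>'\<in>C. \<forall>\<mu>\<in>C. cyl \<mu> xs \<le> 2 * cyl \<mu>' xs"
    using class_nonempty cyl_nonneg by (intro exists_near_maximizer)
  then obtain \<mu>' where "\<mu>' \<in> C \<and> (\<forall>\<mu>\<in>C. cyl \<mu> xs \<le> 2 * cyl \<mu>' xs)"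
    by blast
  then show ?thesis
    unfolding near_max_def by (rule someI)
qed

definition word_enum :: "nat \<Rightarrow> nat \<Rightarrow> 'a list" where
  "word_enum n = (SOME h. bij_betw h {0..<CARD('a) ^ n} {xs. length xs = n})"

lemma word_enum_bij: "bij_betw (word_enum n) {0..<CARD('a) ^ n} {xs. length xs = n}"
proof -
  have "card {xs :: 'a list. length xs = n} = CARD('a) ^ n"
    using card_lists_length_eq[of "UNIV :: 'a set" n] by simp
  then have "\<exists>h. bij_betw h {0..<CARD('a) ^ n} {xs :: 'a list. length xs = n}"
    using ex_bij_betw_nat_finite[OF finite_lists_of_length] by metis
  then show ?thesis
    unfolding word_enum_def by (rule someI_ex)
qed

text \<open>Index \<open>j = 0\<close> holds, for every word of length \<open>n\<close>, a near-maximiser of its probability;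
  index \<open>j \<ge> 1\<close> holds the greedy cover at scale \<open>j\<close>.\<close>

definition component :: "nat \<Rightarrow> nat \<Rightarrow> nat \<Rightarrow> 'a stream measure" where
  "component n j i = (if j = 0 then near_max (word_enum n i) else cover n j i)"

definition \<nu> :: "'a stream measure" where
  "\<nu> = mixture inverse_square_weight (flatten_family component)"

lemma component_in_class: "component n j i \<in> C"
  using near_max_spec cover_in_class by (simp add: component_def)

lemma flatten_component_in_class: "flatten_family component k \<in> C"
  using component_in_class by (rule flatten_family_in)

lemma seq_prob_flatten_component: "seq_prob (flatten_family component k)"
  using flatten_component_in_class by (rule seq_prob_class)

lemma seq_prob_\<nu>: "seq_prob \<nu>"
  unfolding \<nu>_def using seq_prob_flatten_component
  by (intro seq_prob_mixture inverse_square_weight_sums less_imp_le inverse_square_weight_pos)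

lemma emeasure_\<nu>:
  assumes "A \<in> sets \<nu>"
  shows "emeasure \<nu> A = (\<Sum>k. ennreal (inverse_square_weight k) * emeasure (flatten_family component k) A)"
  using assms seq_prob_\<nu> seq_prob_flatten_component unfolding \<nu>_def
  by (intro emeasure_mixture less_imp_le inverse_square_weight_pos) (auto simp: seq_prob_def)

lemma cyl_\<nu>_ge_component:
  assumes "i < m"
  shows "weight_bound (n + j) m * cyl (component n j i) xs \<le> cyl \<nu> xs"
proof -
  let ?k = "prod_encode (prod_encode (n, j), i)"
  have "weight_bound (n + j) m * cyl (component n j i) xs \<le> inverse_square_weight ?k * cyl (component n j i) xs"
    by (rule mult_right_mono[OF weight_bound_le_inverse_square_weight[OF assms] cyl_nonneg])
  also have "\<dots> = inverse_square_weight ?k * cyl (flatten_family component ?k) xs"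
    by simp
  also have "\<dots> \<le> cyl \<nu> xs"
    unfolding \<nu>_def using seq_prob_flatten_component
    by (intro cyl_mixture_ge less_imp_le inverse_square_weight_pos inverse_square_weight_sums)
  finally show ?thesis .
qed

text \<open>The factors \<open>1/2\<close> and \<open>1/n\<close> come from \<open>near_max\<close> and from the definition of \<open>good_words\<close>.\<close>

definition crude_factor :: "nat \<Rightarrow> real" where
  "crude_factor n = weight_bound n (CARD('a) ^ n) / 2"

definition cover_factor :: "nat \<Rightarrow> nat \<Rightarrow> real" where
  "cover_factor n j = weight_bound (n + j) (cover_size n j) / real n"

definition crude_rate :: real where
  "crude_rate = 15 + 4 * ln (real CARD('a))"

definition cover_slack :: "nat \<Rightarrow> nat \<Rightarrow> real" where
  "cover_slack n j = 2 + 4 * ln 3 + 8 * ln (real n + real j + 1) + ln (real n)"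

lemma crude_rate_nonneg: "0 \<le> crude_rate"
  by (simp add: crude_rate_def)

lemma crude_factor_pos: "0 < crude_factor n"
  using weight_bound_pos by (simp add: crude_factor_def)

lemma cover_factor_pos: "1 \<le> n \<Longrightarrow> 0 < cover_factor n j"
  using weight_bound_pos by (simp add: cover_factor_def)

lemma cover_factor_le_1: "1 \<le> n \<Longrightarrow> cover_factor n j \<le> 1"
  using weight_bound_le_1[of "n + j" "cover_size n j"] weight_bound_pos[of "n + j" "cover_size n j"]
  unfolding cover_factor_def by (simp add: divide_le_eq)

lemma cyl_\<nu>_ge_class:
  assumes "\<mu> \<in> C" "length xs = n"
  shows "crude_factor n * cyl \<mu> xs \<le> cyl \<nu> xs"
proof -
  have "xs \<in> word_enum n ` {0..<CARD('a) ^ n}"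
    using word_enum_bij[of n] assms(2) by (simp add: bij_betw_def)
  then obtain i where "i < CARD('a) ^ n" "word_enum n i = xs"
    by auto
  then have "component n 0 i = near_max xs"
    by (simp add: component_def)
  have "cyl \<mu> xs \<le> 2 * cyl (near_max xs) xs"
    using near_max_spec[of xs] assms(1) by blast
  then have "crude_factor n * cyl \<mu> xs \<le> crude_factor n * (2 * cyl (near_max xs) xs)"
    using crude_factor_pos[of n] by simp
  also have "\<dots> = weight_bound (n + 0) (CARD('a) ^ n) * cyl (component n 0 i) xs"
    using \<open>component n 0 i = near_max xs\<close> by (simp add: crude_factor_def)
  also have "\<dots> \<le> cyl \<nu> xs"
    using \<open>i < CARD('a) ^ n\<close> by (rule cyl_\<nu>_ge_component)
  finally show ?thesis .
qed

lemma cyl_\<nu>_ge_predictor: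
  assumes "1 \<le> n" "1 \<le> j" "xs \<in> cover_words n j"
  shows "cover_factor n j * cyl \<rho> xs \<le> cyl \<nu> xs"
proof -
  obtain i where "i < cover_size n j" and good: "xs \<in> good_words n (cover n j i)"
    using assms(3) by (auto simp: cover_words_def)
  have "cover_factor n j * cyl \<rho> xs \<le> cover_factor n j * (real n * cyl (cover n j i) xs)"
    using good cover_factor_pos[OF assms(1)] by (simp add: good_words_def)
  also have "\<dots> = weight_bound (n + j) (cover_size n j) * cyl (component n j i) xs"
    using assms(1,2) by (simp add: component_def cover_factor_def)
  also have "\<dots> \<le> cyl \<nu> xs"
    using \<open>i < cover_size n j\<close> by (rule cyl_\<nu>_ge_component)
  finally show ?thesis .
qed

lemma ln_inverse_crude_factor_le:
  assumes "1 \<le> n"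
  shows "ln (1 / crude_factor n) \<le> crude_rate * real n"
proof -
  have "1 / crude_factor n = 2 / weight_bound n (CARD('a) ^ n)"
    by (simp add: crude_factor_def)
  then show ?thesis
    using ln_two_div_weight_bound_le[of n "CARD('a)"] assms by (simp add: crude_rate_def)
qed

lemma ln_inverse_cover_factor_le:
  assumes "1 \<le> n" "1 \<le> j"
  shows "ln (1 / cover_factor n j) \<le> 4 * (real n / real j) + cover_slack n j"
proof -
  have "1 / cover_factor n j = real n / weight_bound (n + j) (cover_size n j)"
    by (simp add: cover_factor_def)
  moreover have "real (cover_size n j) \<le> 2 * exp (real n / real j)"
    unfolding cover_size_def by (rule nat_ceiling_exp_le) simp
  ultimately show ?thesis
    using ln_real_div_weight_bound_le[OF assms] by (simp add: cover_slack_def)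
qed

text \<open>\<open>E = e^(n/2j)\<close> balances the missed \<open>\<rho>\<close>-mass \<open>1/K \<le> e^(-n/j)\<close> against the mass
  \<open>(D + 1) / ln E\<close> of words where \<open>\<mu> > E \<rho>\<close>.\<close>

lemma sum_outside_cover_words_le:
  assumes "\<mu> \<in> C" "cyl_abs_cont n \<mu> \<rho>" "1 \<le> n" "1 \<le> j"
  shows "(\<Sum>xs \<in> {xs. length xs = n} - cover_words n j. cyl \<mu> xs)
    \<le> (1 + 4 * real j + 2 * real j * kl_div_real n \<mu> \<rho>) / real n"
proof -
  define E where "E = exp (real n / real j / 2)"
  define D where "D = kl_div_real n \<mu> \<rho>"
  have "1 < E" "ln E = real n / real j / 2"
    using assms(3,4) by (simp_all add: E_def)
  have "{xs. length xs = n \<and> cyl \<rho> xs \<le> real n * cyl \<mu> xs} - cover_words n j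
      = good_words n \<mu> - cover_words n j"
    by (simp add: good_words_def)
  then have "(\<Sum>xs \<in> {xs. length xs = n} - cover_words n j. cyl \<mu> xs)
      \<le> 1 / real n + E * (1 / real (cover_size n j)) + (D + 1) / ln E"
    unfolding D_def kl_div_real_def
    using finite_lists_of_length sum_cyl_eq_1[OF seq_prob_predictor] cyl_abs_contD[OF assms(2)]
      \<open>1 < E\<close> assms(3) sum_good_words_outside_cover_le[OF assms(1)]
    by (intro sum_outside_cover_le) auto
  moreover have "E * (1 / real (cover_size n j)) \<le> 2 * real j / real n"
  proof -
    have "E / real (cover_size n j) \<le> 2 / (real n / real j)"
      unfolding E_def cover_size_def using assms(3,4) exp_le_nat_ceiling_exp
      by (intro exp_half_divide_le) auto
    then show ?thesis
      by simp
  qed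
  moreover have "(D + 1) / ln E = 2 * real j * (D + 1) / real n"
    using \<open>ln E = real n / real j / 2\<close> by simp
  ultimately have "(\<Sum>xs \<in> {xs. length xs = n} - cover_words n j. cyl \<mu> xs)
      \<le> 1 / real n + 2 * real j / real n + 2 * real j * (D + 1) / real n"
    by linarith
  also have "\<dots> = (1 + 4 * real j + 2 * real j * D) / real n"
    by (simp add: add_divide_distrib[symmetric] algebra_simps)
  finally show ?thesis
    by (simp add: D_def)
qed

lemma cyl_abs_cont_\<nu>: "\<mu> \<in> C \<Longrightarrow> cyl_abs_cont n \<mu> \<nu>"
  using cyl_\<nu>_ge_class crude_factor_pos cyl_nonneg unfolding cyl_abs_cont_def
  by (metis linorder_not_le mult_pos_pos order_le_less)

lemma kl_div_real_\<nu>_le: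
  assumes "\<mu> \<in> C" "cyl_abs_cont n \<mu> \<rho>" "1 \<le> n" "1 \<le> j"
  shows "kl_div_real n \<mu> \<nu> \<le> 4 * (real n / real j) + ((1 + 2 * real j * crude_rate) * kl_div_real n \<mu> \<rho>
    + 1 + (1 + 4 * real j) * crude_rate + cover_slack n j)"
proof -
  define S where "S = {xs :: 'a list. length xs = n}"
  define D where "D = kl_div_real n \<mu> \<rho>"
  define outside where "outside = sum (cyl \<mu>) (S - cover_words n j)"
  have "kl_div_real n \<mu> \<nu> \<le> D + 1 + ln (1 / cover_factor n j) + outside * ln (1 / crude_factor n)"
    unfolding kl_div_real_def D_def outside_def S_def
  proof (rule sum_kl_term_real_dominated_le)
    show "finite {xs :: 'a list. length xs = n}"
      by (rule finite_lists_of_length)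
  qed (use sum_cyl_eq_1 seq_prob_class[OF assms(1)] seq_prob_predictor cyl_abs_contD[OF assms(2)]
      crude_factor_pos cyl_\<nu>_ge_class[OF assms(1)] cover_factor_pos cover_factor_le_1 assms(3)
      cyl_\<nu>_ge_predictor[OF assms(3,4)] in \<open>auto simp: cover_words_def good_words_def\<close>)
  moreover have "0 \<le> D"
    unfolding D_def using seq_prob_class[OF assms(1)] seq_prob_predictor assms(2) by (rule kl_div_real_nonneg)
  moreover have "outside * ln (1 / crude_factor n) \<le> (1 + 4 * real j + 2 * real j * D) * crude_rate"
  proof -
    have "0 \<le> outside"
      unfolding outside_def by (intro sum_nonneg cyl_nonneg)
    with ln_inverse_crude_factor_le[OF assms(3)]
    have "outside * ln (1 / crude_factor n) \<le> outside * (crude_rate * real n)"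
      by (rule mult_left_mono)
    also have "\<dots> \<le> (1 + 4 * real j + 2 * real j * D) / real n * (crude_rate * real n)"
      using sum_outside_cover_words_le[OF assms] crude_rate_nonneg
      by (intro mult_right_mono) (simp_all add: outside_def S_def D_def)
    finally show ?thesis
      using assms(3) by simp
  qed
  ultimately show ?thesis
    using ln_inverse_cover_factor_le[OF assms(3,4)] unfolding D_def by (simp add: algebra_simps)
qed

lemma predicts_\<nu>:
  assumes "\<mu> \<in> C"
  shows "predicts \<nu> \<mu>"
proof -
  define D where "D n = kl_div_real n \<mu> \<rho>" for n
  have abs_cont: "eventually (\<lambda>n. cyl_abs_cont n \<mu> \<rho>) sequentially" and "(\<lambda>n. D n / real n) \<longlonglongrightarrow> 0"
    using predicts_class[OF assms] by (simp_all add: predicts_iff_kl_div_real D_def)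
  have "(\<lambda>n. kl_div_real n \<mu> \<nu> / real n) \<longlonglongrightarrow> 0"
  proof (rule tendsto_zero_by_bounds[where c = 4])
    show "eventually (\<lambda>n. 0 \<le> kl_div_real n \<mu> \<nu>) sequentially"
      using seq_prob_class[OF assms] seq_prob_\<nu> cyl_abs_cont_\<nu>[OF assms] by (simp add: kl_div_real_nonneg)
    fix j :: nat
    assume "1 \<le> j"
    show "eventually (\<lambda>n. kl_div_real n \<mu> \<nu> \<le> 4 * (real n / real j) + ((1 + 2 * real j * crude_rate) * D n
        + 1 + (1 + 4 * real j) * crude_rate + cover_slack n j)) sequentially"
      using abs_cont eventually_ge_at_top[of 1]
      by eventually_elim (use kl_div_real_\<nu>_le[OF assms] \<open>1 \<le> j\<close> in \<open>simp add: D_def\<close>)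
    have "(\<lambda>n. cover_slack n j / real n) \<longlonglongrightarrow> 0"
      unfolding cover_slack_def by real_asymp
    then have "(\<lambda>n. (1 + 2 * real j * crude_rate) * (D n / real n)
        + (1 + (1 + 4 * real j) * crude_rate) * (1 / real n) + cover_slack n j / real n) \<longlonglongrightarrow> 0"
      using tendsto_add[OF tendsto_add[OF tendsto_mult_right_zero[OF \<open>(\<lambda>n. D n / real n) \<longlonglongrightarrow> 0\<close>]
          tendsto_mult_right_zero[OF lim_inverse_n']]] by simp
    then show "(\<lambda>n. ((1 + 2 * real j * crude_rate) * D n + 1 + (1 + 4 * real j) * crude_rate + cover_slack n j)
        / real n) \<longlonglongrightarrow> 0"
      by (simp add: add_divide_distrib algebra_simps)
  qed
  then show ?thesis
    using cyl_abs_cont_\<nu>[OF assms] by (simp add: predicts_iff_kl_div_real)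
qed

end

theorem theorem2:
  fixes C :: "('a::finite) stream measure set"
  assumes "C \<noteq> {}"
    and "\<forall>\<mu>\<in>C. seq_prob \<mu>"
    and "\<exists>\<rho>. seq_prob \<rho> \<and> (\<forall>\<mu>\<in>C. predicts \<rho> \<mu>)"
  shows "\<exists>(\<mu>s :: nat \<Rightarrow> 'a stream measure) (w :: nat \<Rightarrow> real) \<nu>.
           (\<forall>k. \<mu>s k \<in> C) \<and> (\<forall>k. w k > 0) \<and> w sums 1 \<and>
           seq_prob \<nu> \<and>
           (\<forall>A \<in> sets \<nu>. emeasure \<nu> A = (\<Sum>k. ennreal (w k) * emeasure (\<mu>s k) A)) \<and>
           (\<forall>\<mu>\<in>C. predicts \<nu> \<mu>)"
proof -
  obtain \<rho> where "seq_prob \<rho>" "\<forall>\<mu>\<in>C. predicts \<rho> \<mu>"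
    using assms(3) by blast
  then interpret predictable_class C \<rho>
    using assms(1,2) by unfold_locales auto
  show ?thesis
    using flatten_component_in_class inverse_square_weight_pos inverse_square_weight_sums seq_prob_\<nu>
      emeasure_\<nu> predicts_\<nu>
    by blast
qed

end
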